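(* Let $u_0\in L^\infty(\Omega)\cap W_0^{1,2}(\Omega)$ with $u_0\ge0$, $\frac1{u_0}\in L^\infty_{loc}(\Omega)$, $\|u_0\|_{\Phi,\infty}<\infty$, and let $T_{\max}\in(0,\infty]$ and $u$ be the locally positive weak solution in $\Omega\times(0,T_{\max})$ provided by the existence theorem described in the context. If $\limsup_{t\nearrow T_{\max}}\|u(\cdot,t)\|_{L^\infty(\Omega)}=\infty$, then also $$\limsup_{t\nearrow T_{\max}}\int_\Omega|\nabla u(x,t)|^2\,dx=\infty.$$
   Context: $\Omega\subset\mathbb{R}^N$ is a bounded smooth domain; $\Phi$ solves $-\Delta\Phi=1$ in $\Omega$, $\Phi=0$ on $\partial\Omega$; $\|v\|_{\Phi,\infty}:=\operatorname{ess\,sup}_\Omega|v/\Phi|$. A weak solution of $u_t=u\Delta u+u\int_\Omega|\nabla u|^2$, $u=0$ on $\partial\Omega$, $u(\cdot,0)=u_0$ in $\Omega\times(0,T)$ is a nonnegative $u\in L^\infty_{loc}(\bar\Omega\times[0,T))\cap L^2_{loc}([0,T);W_0^{1,2}(\Omega))$ with $u_t\in L^2_{loc}(\bar\Omega\times[0,T))$ and $-\int_0^T\!\int_\Omega u\varphi_t+\int_0^T\!\int_\Omega\nabla u\cdot\nabla(u\varphi)=\int_\Omega u_0\varphi(\cdot,0)+\int_0^T(\int_\Omega u\varphi)(\int_\Omega|\nabla u|^2)dt$ for all $\varphi\in C_0^\infty(\Omega\times[0,T))$; locally positive means $1/u\in L^\infty_{loc}(\Omega\times[0,T])$. The existence theorem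 provides $T_{\max}$ and $u$ such that: either $T_{\max}=\infty$ or $\limsup_{t\nearrow T_{\max}}\|u(\cdot,t)\|_{L^\infty}=\infty$; for each smoothly bounded $\Omega'\subset\subset\Omega$ (with $\phi$ solving $-\Delta\phi=1$ in $\Omega'$, $\phi=0$ on $\partial\Omega'$) there is $C_{\Omega'}>0$ with $\int_\Omega|\nabla u(\cdot,t)|^2\le\int_\Omega|\nabla u_0|^2\exp[\frac1{2C_{\Omega'}}(\sup_{\tau\in(0,t)}\int_\Omega u(\cdot,\tau))(\int_{\Omega'}\phi\ln u(\cdot,t)-\int_{\Omega'}\phi\ln u_0+\int_0^t\int_{\Omega'}u)]$ for a.e. $t$; and $\|u(\cdot,t)\|_{\Phi,\infty}\le\max\{\|u_0\|_{\Phi,\infty},\sup_{\tau\in(0,t)}\int_\Omega|\nabla u(\cdot,\tau)|^2\}$ for a.e. $t\in(0,T_{\max})$. *)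

theory Defs
  imports "HOL-Analysis.Analysis"
begin

definition pd :: "'a::euclidean_space \<Rightarrow> ('a \<Rightarrow> real) \<Rightarrow> 'a \<Rightarrow> real" where
  "pd v f x = deriv (\<lambda>h. f (x + h *\<^sub>R v)) 0"

definition grad :: "('a::euclidean_space \<Rightarrow> real) \<Rightarrow> 'a \<Rightarrow> 'a" where
  "grad f x = (\<Sum>b\<in>Basis. pd b f x *\<^sub>R b)"

definition laplacian :: "('a::euclidean_space \<Rightarrow> real) \<Rightarrow> 'a \<Rightarrow> real" where
  "laplacian f x = (\<Sum>b\<in>Basis. pd b (pd b f) x)"

definition Ck_on :: "nat \<Rightarrow> 'a::euclidean_space set \<Rightarrow> ('a \<Rightarrow> real) \<Rightarrow> bool" where
  "Ck_on k S f \<longleftrightarrow> (\<forall>vs. set vs \<subseteq> Basis \<and> length vs \<le> k \<longrightarrow>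
      continuous_on S (foldr pd vs f) \<and>
      (length vs < k \<longrightarrow> (\<forall>v\<in>Basis. \<forall>x\<in>S.
          (\<lambda>h. foldr pd vs f (x + h *\<^sub>R v)) differentiable (at 0))))"

definition smooth_on :: "'a::euclidean_space set \<Rightarrow> ('a \<Rightarrow> real) \<Rightarrow> bool" where
  "smooth_on S f \<longleftrightarrow> (\<forall>k. Ck_on k S f)"

text \<open>Bounded domain with smooth boundary (via a global smooth defining function).\<close>
definition smooth_domain :: "'a::euclidean_space set \<Rightarrow> bool" where
  "smooth_domain \<Omega> \<longleftrightarrow> open \<Omega> \<and> connected \<Omega> \<and> bounded \<Omega> \<and> \<Omega> \<noteq> {} \<and>
     (\<exists>\<rho>. smooth_on UNIV \<rho> \<and> \<Omega> = {x. \<rho> x < 0} \<and> (\<forall>x. \<rho> x = 0 \<longrightarrow> grad \<rho> x \<noteq> 0))"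

definition torsion_function :: "'a::euclidean_space set \<Rightarrow> ('a \<Rightarrow> real) \<Rightarrow> bool" where
  "torsion_function \<Omega> \<Phi> \<longleftrightarrow> Ck_on 2 \<Omega> \<Phi> \<and> continuous_on (closure \<Omega>) \<Phi> \<and>
     (\<forall>x\<in>\<Omega>. - laplacian \<Phi> x = 1) \<and> (\<forall>x\<in>frontier \<Omega>. \<Phi> x = 0)"

text \<open>Essential supremum of f over S w.r.t. M (no measurability requirement).\<close>
definition ess_sup :: "'b measure \<Rightarrow> 'b set \<Rightarrow> ('b \<Rightarrow> ereal) \<Rightarrow> ereal" where
  "ess_sup M S f = Inf {z. AE x in M. x \<in> S \<longrightarrow> f x \<le> z}"

definition Linf_norm :: "'a::euclidean_space set \<Rightarrow> ('a \<Rightarrow> real) \<Rightarrow> ereal" where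
  "Linf_norm \<Omega> f = ess_sup lebesgue \<Omega> (\<lambda>x. ereal \<bar>f x\<bar>)"

definition Phi_norm :: "'a::euclidean_space set \<Rightarrow> ('a \<Rightarrow> real) \<Rightarrow> ('a \<Rightarrow> real) \<Rightarrow> ereal" where
  "Phi_norm \<Omega> \<Phi> f = ess_sup lebesgue \<Omega> (\<lambda>x. ereal \<bar>f x / \<Phi> x\<bar>)"

definition test_fun :: "'a::euclidean_space set \<Rightarrow> ('a \<Rightarrow> real) \<Rightarrow> bool" where
  "test_fun U \<psi> \<longleftrightarrow> smooth_on UNIV \<psi> \<and> compact (closure {x. \<psi> x \<noteq> 0}) \<and>
     closure {x. \<psi> x \<noteq> 0} \<subseteq> U"

definition W12_0 :: "'a::euclidean_space set \<Rightarrow> ('a \<Rightarrow> real) \<Rightarrow> ('a \<Rightarrow> 'a) \<Rightarrow> bool" where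
  "W12_0 \<Omega> f g \<longleftrightarrow> set_borel_measurable lebesgue \<Omega> f \<and> set_borel_measurable lebesgue \<Omega> g \<and>
     set_integrable lebesgue \<Omega> (\<lambda>x. (f x)\<^sup>2) \<and> set_integrable lebesgue \<Omega> (\<lambda>x. (norm (g x))\<^sup>2) \<and>
     (\<exists>\<psi>. (\<forall>k. test_fun \<Omega> (\<psi> k)) \<and>
        (\<lambda>k. LINT x:\<Omega>|lebesgue. (\<psi> k x - f x)\<^sup>2 + (norm (grad (\<psi> k) x - g x))\<^sup>2) \<longlonglongrightarrow> 0)"

definition tint :: "ereal \<Rightarrow> real set" where
  "tint T = {t. 0 < t \<and> ereal t < T}"

definition xgrad :: "('a::euclidean_space \<times> real \<Rightarrow> real) \<Rightarrow> 'a \<times> real \<Rightarrow> 'a" where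
  "xgrad \<phi> p = (\<Sum>b\<in>Basis. pd (b, 0) \<phi> p *\<^sub>R b)"

definition tderiv :: "('a::euclidean_space \<times> real \<Rightarrow> real) \<Rightarrow> 'a \<times> real \<Rightarrow> real" where
  "tderiv \<phi> p = pd (0, 1) \<phi> p"

text \<open>Weak solution of u_t = u \<Delta>u + u \<integral>|\<nabla>u|^2, u = 0 on \<partial>\<Omega>, u(0) = u0 in \<Omega> \<times> (0,T);
  Du is the spatial (weak) gradient of u.  Test functions in C_0^\<infinity>(\<Omega>\<times>[0,T)) are represented
  by smooth functions on \<real>^N \<times> \<real> with compact support in \<Omega> \<times> (-\<infinity>,T).\<close>
definition weak_solution ::
  "'a::euclidean_space set \<Rightarrow> ereal \<Rightarrow> ('a \<Rightarrow> real) \<Rightarrow> ('a \<Rightarrow> real \<Rightarrow> real) \<Rightarrow> ('a \<Rightarrow> real \<Rightarrow> 'a) \<Rightarrow> bool"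
where
  "weak_solution \<Omega> T u0 u Du \<longleftrightarrow>
     \<comment> \<open>nonnegativity\<close>
     (AE p in lebesgue. p \<in> \<Omega> \<times> tint T \<longrightarrow> u (fst p) (snd p) \<ge> 0) \<and>
     \<comment> \<open>u \<in> L^\<infinity>_loc(\<Omega>\<times>[0,T))\<close>
     (\<forall>T'. 0 < T' \<and> ereal T' < T \<longrightarrow>
        set_borel_measurable lebesgue (\<Omega> \<times> {0<..<T'}) (\<lambda>p. u (fst p) (snd p)) \<and>
        (\<exists>M. AE p in lebesgue. p \<in> \<Omega> \<times> {0<..<T'} \<longrightarrow> \<bar>u (fst p) (snd p)\<bar> \<le> M)) \<and>
     \<comment> \<open>u \<in> L^2_loc([0,T); W_0^{1,2}(\<Omega>))\<close>
     (\<forall>T'. 0 < T' \<and> ereal T' < T \<longrightarrow>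
        set_borel_measurable lebesgue (\<Omega> \<times> {0<..<T'}) (\<lambda>p. Du (fst p) (snd p)) \<and>
        set_integrable lebesgue (\<Omega> \<times> {0<..<T'}) (\<lambda>p. (norm (Du (fst p) (snd p)))\<^sup>2) \<and>
        (AE t in lebesgue. t \<in> {0<..<T'} \<longrightarrow> W12_0 \<Omega> (\<lambda>x. u x t) (\<lambda>x. Du x t))) \<and>
     \<comment> \<open>u_t \<in> L^2_loc(\<Omega>\<times>[0,T))\<close>
     (\<exists>ut :: 'a \<Rightarrow> real \<Rightarrow> real.
        (\<forall>T'. 0 < T' \<and> ereal T' < T \<longrightarrow>
           set_borel_measurable lebesgue (\<Omega> \<times> {0<..<T'}) (\<lambda>p. ut (fst p) (snd p)) \<and>
           set_integrable lebesgue (\<Omega> \<times> {0<..<T'}) (\<lambda>p. (ut (fst p) (snd p))\<^sup>2)) \<and>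
        (\<forall>\<psi>. test_fun (\<Omega> \<times> tint T) \<psi> \<longrightarrow>
           (LINT p:\<Omega> \<times> tint T|lebesgue. u (fst p) (snd p) * tderiv \<psi> p) =
           - (LINT p:\<Omega> \<times> tint T|lebesgue. ut (fst p) (snd p) * \<psi> p))) \<and>
     \<comment> \<open>the weak formulation\<close>
     (\<forall>\<phi>. test_fun (\<Omega> \<times> {t. ereal t < T}) \<phi> \<longrightarrow>
        - (LINT p:\<Omega> \<times> tint T|lebesgue. u (fst p) (snd p) * tderiv \<phi> p)
        + (LINT p:\<Omega> \<times> tint T|lebesgue.
             Du (fst p) (snd p) \<bullet> (\<phi> p *\<^sub>R Du (fst p) (snd p) + u (fst p) (snd p) *\<^sub>R xgrad \<phi> p))
        = (LINT x:\<Omega>|lebesgue. u0 x * \<phi> (x, 0))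
        + (LINT t:tint T|lebesgue.
             (LINT x:\<Omega>|lebesgue. u x t * \<phi> (x, t)) * (LINT x:\<Omega>|lebesgue. (norm (Du x t))\<^sup>2)))"

definition locally_positive :: "'a::euclidean_space set \<Rightarrow> ereal \<Rightarrow> ('a \<Rightarrow> real \<Rightarrow> real) \<Rightarrow> bool" where
  "locally_positive \<Omega> T u \<longleftrightarrow>
     (\<forall>K T'. compact K \<and> K \<subseteq> \<Omega> \<and> 0 < T' \<and> ereal T' \<le> T \<longrightarrow>
        (\<exists>M. AE p in lebesgue. p \<in> K \<times> {0<..<T'} \<longrightarrow>
              u (fst p) (snd p) > 0 \<and> 1 / u (fst p) (snd p) \<le> M))"

definition ess_limsup_left :: "ereal \<Rightarrow> (real \<Rightarrow> ereal) \<Rightarrow> ereal" where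
  "ess_limsup_left T f = (INF a\<in>{a. 0 < a \<and> ereal a < T}. ess_sup lebesgue {t. a < t \<and> ereal t < T} f)"

definition energy :: "'a::euclidean_space set \<Rightarrow> ('a \<Rightarrow> real \<Rightarrow> 'a) \<Rightarrow> real \<Rightarrow> real" where
  "energy \<Omega> Du t = (LINT x:\<Omega>|lebesgue. (norm (Du x t))\<^sup>2)"

end

theory Submission
  imports Defs
begin

text \<open>Suppose the energy stayed essentially bounded near \<open>Tmax\<close>. On an initial interval
  \<open>(0, T')\<close> it is bounded as well: in the exponential energy estimate, applied to a ball
  inside \<open>\<Omega>\<close> with its explicit torsion function, the mass terms are controlled by the local
  \<open>L\<^sup>\<infinity>\<close> bound of \<open>u\<close> and the logarithmic term by local positivity. Hence the energy is
  essentially bounded on all of \<open>(0, Tmax)\<close>, the \<open>\<Phi>\<close>-weighted estimate bounds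
  \<open>\<parallel>u(t)/\<Phi>\<parallel>\<^sub>\<infinity>\<close>, and since \<open>\<Phi>\<close> is bounded on \<open>\<Omega>\<close> this bounds \<open>\<parallel>u(t)\<parallel>\<^sub>\<infinity>\<close>,
  contradicting the blow-up.\<close>

lemma AE_le_ess_sup: "AE x in M. x \<in> S \<longrightarrow> f x \<le> ess_sup M S f"
proof -
  let ?A = "{z. AE x in M. x \<in> S \<longrightarrow> f x \<le> z}"
  obtain z where z: "\<And>n. z n \<in> ?A" "z \<longlonglongrightarrow> Inf ?A"
    using Inf_as_limit[of ?A] by (metis (mono_tags, lifting) AE_I2 empty_iff mem_Collect_eq top_greatest)
  have "AE x in M. \<forall>n. x \<in> S \<longrightarrow> f x \<le> z n"
    using z(1) by (subst AE_all_countable) simp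
  then show ?thesis
    unfolding ess_sup_def
    by (rule eventually_mono) (auto intro: LIMSEQ_le_const[OF z(2)])
qed

lemma ess_sup_le_iff: "ess_sup M S f \<le> z \<longleftrightarrow> (AE x in M. x \<in> S \<longrightarrow> f x \<le> z)"
proof
  assume le: "ess_sup M S f \<le> z"
  show "AE x in M. x \<in> S \<longrightarrow> f x \<le> z"
    using AE_le_ess_sup[where M=M and S=S and f=f]
    by (rule eventually_mono) (use le in \<open>auto intro: order_trans\<close>)
qed (auto simp: ess_sup_def intro: Inf_lower)

lemma ess_sup_ge:
  assumes "S \<in> sets M" "emeasure M S \<noteq> 0" "AE x in M. x \<in> S \<longrightarrow> z \<le> f x"
  shows "z \<le> ess_sup M S f"
proof (rule ccontr)
  assume gt: "\<not> z \<le> ess_sup M S f"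
  have "AE x in M. x \<notin> S"
    using assms(3) AE_le_ess_sup[where M=M and S=S and f=f]
    by eventually_elim (use gt in \<open>auto dest: order_trans\<close>)
  then have "S \<in> null_sets M"
    using assms(1) by (simp add: AE_iff_null_sets sets.sets_into_space Int_absorb1 Collect_mem_eq)
  with assms(2) show False by auto
qed

lemma abs_real_of_ess_sup_le:
  fixes g :: "'b \<Rightarrow> real"
  assumes "S \<in> sets M" "emeasure M S \<noteq> 0" "AE x in M. x \<in> S \<longrightarrow> \<bar>g x\<bar> \<le> A"
  shows "\<bar>real_of_ereal (ess_sup M S (\<lambda>x. ereal (g x)))\<bar> \<le> A"
proof -
  have "ess_sup M S (\<lambda>x. ereal (g x)) \<le> ereal A"
    unfolding ess_sup_le_iff using assms(3) by (rule eventually_mono) auto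
  moreover have "ereal (- A) \<le> ess_sup M S (\<lambda>x. ereal (g x))"
    using assms(1,2) by (rule ess_sup_ge) (use assms(3) in \<open>auto elim!: eventually_mono\<close>)
  ultimately show ?thesis
    by (cases "ess_sup M S (\<lambda>x. ereal (g x))") auto
qed

lemma ess_limsup_left_le:
  assumes "0 < a" "ereal a < T" "AE t in lebesgue. a < t \<and> ereal t < T \<longrightarrow> f t \<le> z"
  shows "ess_limsup_left T f \<le> z"
  unfolding ess_limsup_left_def
  by (rule INF_lower2[of a]) (use assms in \<open>auto simp: ess_sup_le_iff\<close>)

lemma ess_limsup_left_finite_imp_bounded:
  assumes "ess_limsup_left T (\<lambda>t. ereal (f t)) \<noteq> \<infinity>"
  obtains a E where "0 < a" "ereal a < T" "AE t in lebesgue. a < t \<and> ereal t < T \<longrightarrow> f t \<le> E"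
proof -
  have "ess_limsup_left T (\<lambda>t. ereal (f t)) < \<infinity>"
    using assms by (simp add: less_top[symmetric])
  then obtain a where a: "0 < a" "ereal a < T"
    and "ess_sup lebesgue {t. a < t \<and> ereal t < T} (\<lambda>t. ereal (f t)) < \<infinity>"
    unfolding ess_limsup_left_def INF_less_iff by auto
  then obtain E where "ess_sup lebesgue {t. a < t \<and> ereal t < T} (\<lambda>t. ereal (f t)) \<le> ereal E"
    by (cases "ess_sup lebesgue {t. a < t \<and> ereal t < T} (\<lambda>t. ereal (f t))") auto
  then show thesis
    using a by (intro that[of a E]) (auto simp: ess_sup_le_iff)
qed

lemma abs_set_integral_le:
  fixes f :: "'b \<Rightarrow> real"
  assumes S: "S \<in> sets M" "emeasure M S < \<infinity>"
    and bound: "AE x in M. x \<in> S \<longrightarrow> \<bar>f x\<bar> \<le> B"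
  shows "\<bar>LINT x:S|M. f x\<bar> \<le> max B 0 * measure M S"
proof (cases "set_integrable M S f")
  case True
  have "\<bar>LINT x:S|M. f x\<bar> \<le> (LINT x|M. norm (indicator S x *\<^sub>R f x))"
    unfolding set_lebesgue_integral_def using integral_norm_bound by (metis real_norm_def)
  also have "\<dots> \<le> (LINT x|M. indicator S x * max B 0)"
  proof (rule integral_mono_AE)
    show "integrable M (\<lambda>x. norm (indicator S x *\<^sub>R f x))"
      using True unfolding set_integrable_def by (rule integrable_norm)
    show "integrable M (\<lambda>x. indicator S x * max B 0)"
      using S by (intro integrable_mult_left integrable_real_indicator)
    show "AE x in M. norm (indicator S x *\<^sub>R f x) \<le> indicator S x * max B 0"
      using bound by (rule eventually_mono) (auto simp: indicator_def)
  qed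
  also have "\<dots> = max B 0 * measure M S"
    using S by (simp add: measure_def)
  finally show ?thesis .
next
  case False
  then show ?thesis
    by (simp add: set_lebesgue_integral_def set_integrable_def not_integrable_integral_eq)
qed

lemma AE_lebesgue_pair_slice:
  assumes "AE p in (lebesgue :: ('a::euclidean_space \<times> 'b::euclidean_space) measure). P (fst p) (snd p)"
  shows "AE y in lebesgue. AE x in lebesgue. P x y"
proof -
  have "AE p in (lborel :: 'a measure) \<Otimes>\<^sub>M (lborel :: 'b measure). P (fst p) (snd p)"
    unfolding lborel_prod using assms by (simp add: AE_completion_iff)
  then have "AE q in (lborel :: 'b measure) \<Otimes>\<^sub>M (lborel :: 'a measure). P (snd q) (fst q)"
    by (subst (asm) lborel_pair.distr_pair_swap)
       (auto dest: AE_distrD[OF measurable_pair_swap'] simp: case_prod_beta)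
  then have "AE y in lborel. AE x in lborel. P x y"
    by (rule lborel_pair.AE_pair[where Q = "\<lambda>q. P (snd q) (fst q)", simplified])
  then show ?thesis
    by (rule AE_completion[THEN eventually_mono]) (rule AE_completion)
qed

lemma AE_abs_set_integral_slice_le:
  fixes f :: "'a::euclidean_space \<Rightarrow> 'b::euclidean_space \<Rightarrow> real"
  assumes S: "S \<in> sets lebesgue" "emeasure lebesgue S < \<infinity>"
    and bound: "AE p in lebesgue. p \<in> S \<times> I \<longrightarrow> \<bar>f (fst p) (snd p)\<bar> \<le> B"
  shows "AE y in lebesgue. y \<in> I \<longrightarrow> \<bar>LINT x:S|lebesgue. f x y\<bar> \<le> max B 0 * measure lebesgue S"
proof -
  have "AE y in lebesgue. AE x in lebesgue. x \<in> S \<and> y \<in> I \<longrightarrow> \<bar>f x y\<bar> \<le> B"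
    by (rule AE_lebesgue_pair_slice) (use bound in \<open>auto simp: mem_Times_iff elim!: eventually_mono\<close>)
  then show ?thesis
  proof (rule eventually_mono, intro impI)
    fix y assume "AE x in lebesgue. x \<in> S \<and> y \<in> I \<longrightarrow> \<bar>f x y\<bar> \<le> B" "y \<in> I"
    then have "AE x in lebesgue. x \<in> S \<longrightarrow> \<bar>f x y\<bar> \<le> B" by (auto elim: eventually_mono)
    then show "\<bar>LINT x:S|lebesgue. f x y\<bar> \<le> max B 0 * measure lebesgue S"
      by (rule abs_set_integral_le[OF S])
  qed
qed

section \<open>The torsion function of a ball\<close>

definition quadratic :: "real \<Rightarrow> 'a::euclidean_space \<Rightarrow> real \<Rightarrow> 'a \<Rightarrow> real" where
  "quadratic \<alpha> w \<beta> x = \<alpha> * (x \<bullet> x) + w \<bullet> x + \<beta>"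

lemma quadratic_along_line_has_derivative:
  "((\<lambda>h. quadratic \<alpha> w \<beta> (x + h *\<^sub>R v)) has_real_derivative
     2 * \<alpha> * (v \<bullet> x) + 2 * \<alpha> * h * (v \<bullet> v) + w \<bullet> v) (at h)"
proof -
  have "(\<lambda>h. quadratic \<alpha> w \<beta> (x + h *\<^sub>R v)) =
    (\<lambda>h. \<alpha> * (x \<bullet> x) + 2 * \<alpha> * h * (v \<bullet> x) + \<alpha> * h\<^sup>2 * (v \<bullet> v) + w \<bullet> x + h * (w \<bullet> v) + \<beta>)"
    by (auto simp: quadratic_def inner_add_left inner_add_right algebra_simps power2_eq_square inner_commute)
  then show ?thesis
    by (auto intro!: derivative_eq_intros simp: algebra_simps)
qed

lemma pd_quadratic: "pd v (quadratic \<alpha> w \<beta>) = quadratic 0 ((2 * \<alpha>) *\<^sub>R v) (w \<bullet> v)"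
proof
  fix x
  have "pd v (quadratic \<alpha> w \<beta>) x = 2 * \<alpha> * (v \<bullet> x) + 2 * \<alpha> * 0 * (v \<bullet> v) + w \<bullet> v"
    unfolding pd_def by (rule DERIV_imp_deriv[OF quadratic_along_line_has_derivative])
  then show "pd v (quadratic \<alpha> w \<beta>) x = quadratic 0 ((2 * \<alpha>) *\<^sub>R v) (w \<bullet> v) x"
    by (simp add: quadratic_def)
qed

lemma Ck_on_quadratic: "Ck_on k S (quadratic \<alpha> w \<beta>)"
proof -
  have "\<exists>\<alpha>' w' \<beta>'. foldr pd vs (quadratic \<alpha> w \<beta>) = quadratic \<alpha>' w' \<beta>'" for vs :: "'a list"
    by (induction vs) (fastforce simp: pd_quadratic)+
  moreover have "continuous_on S (quadratic \<alpha>' w' \<beta>')" for \<alpha>' w' \<beta>'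
    unfolding quadratic_def[abs_def] by (intro continuous_intros)
  moreover have "(\<lambda>h. quadratic \<alpha>' w' \<beta>' (x + h *\<^sub>R v)) differentiable (at 0)" for \<alpha>' w' \<beta>' x v
    using quadratic_along_line_has_derivative real_differentiable_def by blast
  ultimately show ?thesis
    unfolding Ck_on_def by metis
qed

lemma grad_quadratic: "grad (quadratic \<alpha> w \<beta>) x = (2 * \<alpha>) *\<^sub>R x + w"
proof -
  have "grad (quadratic \<alpha> w \<beta>) x = (\<Sum>b\<in>Basis. (((2 * \<alpha>) *\<^sub>R x + w) \<bullet> b) *\<^sub>R b)"
    unfolding grad_def pd_quadratic
    by (auto simp: quadratic_def inner_add_right inner_commute intro!: sum.cong)
  then show ?thesis by (simp add: euclidean_representation)
qed

lemma laplacian_quadratic: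
  "laplacian (quadratic \<alpha> w \<beta>) (x :: 'a::euclidean_space) = 2 * \<alpha> * DIM('a)"
  unfolding laplacian_def pd_quadratic by (simp add: quadratic_def)

lemma smooth_domain_ball:
  fixes c :: "'a::euclidean_space"
  assumes r: "0 < r"
  shows "smooth_domain (ball c r)"
proof -
  define \<rho> where "\<rho> = quadratic 1 ((-2) *\<^sub>R c) (c \<bullet> c - r\<^sup>2)"
  have \<rho>: "\<rho> x = (norm (x - c))\<^sup>2 - r\<^sup>2" for x
    by (simp add: \<rho>_def quadratic_def power2_norm_eq_inner inner_diff_left inner_diff_right inner_commute)
  have "{x. \<rho> x < 0} = ball c r"
    using r by (auto simp: \<rho> dist_norm norm_minus_commute power_strict_mono
        dest: power_less_imp_less_base[of _ 2 r])
  moreover have "grad \<rho> x \<noteq> 0" if "\<rho> x = 0" for x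
  proof -
    have "x \<noteq> c" using r that \<rho>[of c] by auto
    then show ?thesis by (auto simp: \<rho>_def grad_quadratic algebra_simps)
  qed
  moreover have "smooth_on UNIV \<rho>"
    by (simp add: \<rho>_def smooth_on_def Ck_on_quadratic)
  ultimately show ?thesis
    using r unfolding smooth_domain_def by (intro conjI exI[of _ \<rho>]) auto
qed

definition ball_torsion :: "'a::euclidean_space \<Rightarrow> real \<Rightarrow> 'a \<Rightarrow> real" where
  "ball_torsion c r x = (r\<^sup>2 - (norm (x - c))\<^sup>2) / (2 * DIM('a))"

lemma ball_torsion_eq_quadratic:
  "ball_torsion c (r::real) =
     quadratic (- 1 / (2 * DIM('a))) ((1 / DIM('a)) *\<^sub>R c) ((r\<^sup>2 - c \<bullet> c) / (2 * DIM('a)))"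
  for c :: "'a::euclidean_space"
  by (rule ext) (simp add: ball_torsion_def quadratic_def power2_norm_eq_inner inner_diff_left
      inner_diff_right inner_commute field_simps)

lemma torsion_function_ball:
  assumes r: "0 < r"
  shows "torsion_function (ball c r) (ball_torsion c r)"
  unfolding torsion_function_def
proof (intro conjI ballI)
  show "Ck_on 2 (ball c r) (ball_torsion c r)"
    unfolding ball_torsion_eq_quadratic by (rule Ck_on_quadratic)
  show "continuous_on (closure (ball c r)) (ball_torsion c r)"
    unfolding ball_torsion_def by (intro continuous_intros) auto
  show "- laplacian (ball_torsion c r) x = 1" for x
    unfolding ball_torsion_eq_quadratic laplacian_quadratic by simp
  show "ball_torsion c r x = 0" if "x \<in> frontier (ball c r)" for x
    using that r by (simp add: ball_torsion_def frontier_ball dist_norm norm_minus_commute)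
qed

lemma abs_ball_torsion_le:
  fixes c :: "'a::euclidean_space"
  assumes "x \<in> ball c r"
  shows "\<bar>ball_torsion c r x\<bar> \<le> r\<^sup>2"
proof -
  have "norm (x - c) < r" using assms by (simp add: dist_norm norm_minus_commute)
  then have "0 \<le> r\<^sup>2 - (norm (x - c))\<^sup>2" "r\<^sup>2 - (norm (x - c))\<^sup>2 \<le> r\<^sup>2"
    by (simp_all add: power_mono)
  moreover have "1 \<le> 2 * real DIM('a)" using DIM_positive[where 'a='a] by linarith
  ultimately show ?thesis
    unfolding ball_torsion_def abs_divide
    by (simp add: divide_le_eq order_trans[OF _ mult_le_cancel_left1[THEN iffD2]])
qed

lemma smooth_subdomain_with_torsion:
  fixes \<Omega> :: "'a::euclidean_space set"
  assumes "open \<Omega>" "c \<in> \<Omega>"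
  obtains \<Omega>' \<phi> P where "smooth_domain \<Omega>'" "closure \<Omega>' \<subseteq> \<Omega>" "torsion_function \<Omega>' \<phi>"
    "\<forall>x\<in>\<Omega>'. \<bar>\<phi> x\<bar> \<le> P"
proof -
  obtain e where e: "0 < e" "ball c e \<subseteq> \<Omega>" using assms open_contains_ball by blast
  then have "closure (ball c (e/2)) \<subseteq> \<Omega>" by auto
  with e(1) show ?thesis
    using that[of "ball c (e/2)" "ball_torsion c (e/2)" "(e/2)\<^sup>2"]
    by (simp add: smooth_domain_ball torsion_function_ball abs_ball_torsion_le)
qed

section \<open>Positivity of the torsion function\<close>

lemma second_derivative_nonneg_at_local_min:
  fixes g g' :: "real \<Rightarrow> real"
  assumes e: "0 < e"
    and g: "\<And>h. \<bar>h\<bar> < e \<Longrightarrow> (g has_real_derivative g' h) (at h)"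
    and g': "(g' has_real_derivative g'') (at 0)"
    and min: "\<And>h. \<bar>h\<bar> < e \<Longrightarrow> g 0 \<le> g h"
  shows "0 \<le> g''"
proof (rule ccontr)
  assume "\<not> 0 \<le> g''"
  then obtain d where d: "0 < d" "\<And>h. 0 < h \<Longrightarrow> h < d \<Longrightarrow> g' (0 + h) < g' 0"
    using DERIV_neg_dec_right[OF g'] by force
  have "g' 0 = 0"
    by (rule DERIV_local_min[OF g e]) (use e min in auto)
  define h where "h = min d e / 2"
  have h: "0 < h" "h < d" "h < e" using d e by (auto simp: h_def)
  obtain z where z: "0 < z" "z < h" "g h - g 0 = (h - 0) * g' z"
    using MVT2[of 0 h g g'] h g by force
  have "g' z < 0" using d(2)[of z] z h \<open>g' 0 = 0\<close> by simp
  then have "g h < g 0" using z h mult_pos_neg[of h "g' z"] by simp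
  with min[of h] h show False by simp
qed

lemma Ck_on_2_line_differentiable:
  assumes "Ck_on 2 S f" "x \<in> S" "b \<in> Basis"
  shows "(\<lambda>h. f (x + h *\<^sub>R b)) differentiable (at 0)"
    and "(\<lambda>h. pd b f (x + h *\<^sub>R b)) differentiable (at 0)"
proof -
  have "\<forall>v\<in>Basis. \<forall>x\<in>S. (\<lambda>h. foldr pd vs f (x + h *\<^sub>R v)) differentiable (at 0)"
    if "set vs \<subseteq> Basis" "length vs < 2" for vs
    using assms(1) that unfolding Ck_on_def by simp
  from this[of "[]"] this[of "[b]"] assms(2,3)
  show "(\<lambda>h. f (x + h *\<^sub>R b)) differentiable (at 0)"
    and "(\<lambda>h. pd b f (x + h *\<^sub>R b)) differentiable (at 0)" by simp_all
qed

lemma line_has_real_derivative_pd: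
  assumes "(\<lambda>s. f (x + h *\<^sub>R v + s *\<^sub>R v)) differentiable (at 0)"
  shows "((\<lambda>s. f (x + s *\<^sub>R v)) has_real_derivative pd v f (x + h *\<^sub>R v)) (at h)"
proof -
  have "((\<lambda>s. f (x + h *\<^sub>R v + s *\<^sub>R v)) has_real_derivative pd v f (x + h *\<^sub>R v)) (at 0)"
    using assms unfolding pd_def by (simp add: DERIV_deriv_iff_real_differentiable)
  moreover have "(\<lambda>s. f (x + h *\<^sub>R v + s *\<^sub>R v)) = (\<lambda>s. f (x + (s + h) *\<^sub>R v))"
    by (simp add: algebra_simps)
  ultimately show ?thesis
    using DERIV_shift[of "\<lambda>s. f (x + s *\<^sub>R v)" _ 0 h] by simp
qed

lemma pd_pd_nonneg_at_min:
  fixes f :: "'a::euclidean_space \<Rightarrow> real"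
  assumes "open S" "x0 \<in> S" "\<forall>y\<in>S. f x0 \<le> f y" "Ck_on 2 S f" "b \<in> Basis"
  shows "0 \<le> pd b (pd b f) x0"
proof -
  obtain e where e: "0 < e" "ball x0 e \<subseteq> S" using assms(1,2) open_contains_ball by blast
  have line_in_S: "x0 + h *\<^sub>R b \<in> S" if "\<bar>h\<bar> < e" for h
    using that e assms(5) by (intro subsetD[OF e(2)]) (simp add: dist_norm)
  show ?thesis
  proof (rule second_derivative_nonneg_at_local_min[OF e(1)])
    show "((\<lambda>h. f (x0 + h *\<^sub>R b)) has_real_derivative pd b f (x0 + h *\<^sub>R b)) (at h)"
      if "\<bar>h\<bar> < e" for h
      by (rule line_has_real_derivative_pd)
         (rule Ck_on_2_line_differentiable(1)[OF assms(4) line_in_S[OF that] assms(5)])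
    show "((\<lambda>h. pd b f (x0 + h *\<^sub>R b)) has_real_derivative pd b (pd b f) x0) (at 0)"
      using line_has_real_derivative_pd[of "pd b f" x0 0 b]
        Ck_on_2_line_differentiable(2)[OF assms(4,2,5)] by simp
    show "f (x0 + 0 *\<^sub>R b) \<le> f (x0 + h *\<^sub>R b)" if "\<bar>h\<bar> < e" for h
      using assms(3) line_in_S[OF that] by simp
  qed
qed

text \<open>Minimum principle: a nonpositive value forces a minimum in the interior, since \<open>\<Phi> = 0\<close>
  on the boundary, and there \<open>\<Delta>\<Phi> \<ge> 0\<close> contradicts \<open>-\<Delta>\<Phi> = 1\<close>.\<close>

lemma torsion_function_pos:
  fixes \<Phi> :: "'a::euclidean_space \<Rightarrow> real"
  assumes "open \<Omega>" "bounded \<Omega>" "torsion_function \<Omega> \<Phi>" "x \<in> \<Omega>"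
  shows "0 < \<Phi> x"
proof (rule ccontr)
  assume "\<not> 0 < \<Phi> x"
  have C2: "Ck_on 2 \<Omega> \<Phi>" and cont: "continuous_on (closure \<Omega>) \<Phi>"
    and lap: "\<forall>x\<in>\<Omega>. - laplacian \<Phi> x = 1" and boundary: "\<forall>x\<in>frontier \<Omega>. \<Phi> x = 0"
    using assms(3) unfolding torsion_function_def by auto
  have no_interior_min: False if "x0 \<in> \<Omega>" "\<forall>y\<in>\<Omega>. \<Phi> x0 \<le> \<Phi> y" for x0
  proof -
    have "0 \<le> laplacian \<Phi> x0"
      unfolding laplacian_def by (intro sum_nonneg pd_pd_nonneg_at_min[OF assms(1) that C2])
    with lap that(1) show False by force
  qed
  obtain y where y: "y \<in> closure \<Omega>" "\<forall>z\<in>closure \<Omega>. \<Phi> y \<le> \<Phi> z"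
    using continuous_attains_inf[OF compact_closure[THEN iffD2, OF assms(2)] _ cont] assms(4)
      closure_subset by blast
  show False
  proof (cases "y \<in> \<Omega>")
    case True
    then show False using no_interior_min[of y] y closure_subset by blast
  next
    case False
    then have "\<Phi> y = 0"
      using y(1) boundary assms(1) by (simp add: frontier_def interior_open)
    then have "\<forall>z\<in>\<Omega>. \<Phi> x \<le> \<Phi> z"
      using y(2) closure_subset \<open>\<not> 0 < \<Phi> x\<close> by fastforce
    then show False using no_interior_min assms(4) by blast
  qed
qed

lemma Linf_norm_le_of_Phi_norm_le:
  assumes \<Phi>: "\<And>x. x \<in> \<Omega> \<Longrightarrow> 0 < \<Phi> x \<and> \<Phi> x \<le> P"
    and le: "Phi_norm \<Omega> \<Phi> v \<le> ereal Q"
  shows "Linf_norm \<Omega> v \<le> ereal (P * Q)"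
proof -
  have "AE x in lebesgue. x \<in> \<Omega> \<longrightarrow> \<bar>v x / \<Phi> x\<bar> \<le> Q"
    using le unfolding Phi_norm_def ess_sup_le_iff by simp
  then have "AE x in lebesgue. x \<in> \<Omega> \<longrightarrow> \<bar>v x\<bar> \<le> P * Q"
  proof (rule eventually_mono, intro impI)
    fix x assume "x \<in> \<Omega> \<longrightarrow> \<bar>v x / \<Phi> x\<bar> \<le> Q" "x \<in> \<Omega>"
    with \<Phi> have "\<bar>v x / \<Phi> x\<bar> \<le> Q" "0 < \<Phi> x" "\<Phi> x \<le> P" by auto
    then have "\<Phi> x * \<bar>v x / \<Phi> x\<bar> \<le> P * Q" by (intro mult_mono) auto
    with \<open>0 < \<Phi> x\<close> show "\<bar>v x\<bar> \<le> P * Q" by (simp add: abs_div)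
  qed
  then show ?thesis
    unfolding Linf_norm_def ess_sup_le_iff by simp
qed

lemma Linf_norm_bounded_if_energy_bounded:
  fixes \<Omega> :: "'a::euclidean_space set" and e :: "real \<Rightarrow> real"
  assumes \<Omega>: "open \<Omega>" "bounded \<Omega>" and \<Phi>: "torsion_function \<Omega> \<Phi>"
    and u0: "Phi_norm \<Omega> \<Phi> u0 < \<infinity>"
    and Phi_bound: "AE t in lebesgue. t \<in> tint T \<longrightarrow> Phi_norm \<Omega> \<Phi> (\<lambda>x. u x t) \<le>
           max (Phi_norm \<Omega> \<Phi> u0) (ess_sup lebesgue {0<..<t} (\<lambda>\<tau>. ereal (e \<tau>)))"
    and e_bound: "AE t in lebesgue. t \<in> tint T \<longrightarrow> e t \<le> E"
  obtains W where "AE t in lebesgue. t \<in> tint T \<longrightarrow> Linf_norm \<Omega> (\<lambda>x. u x t) \<le> ereal W"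
proof -
  have "compact (\<Phi> ` closure \<Omega>)"
    using \<Phi> \<Omega>(2) by (intro compact_continuous_image) (auto simp: torsion_function_def compact_closure)
  then obtain P where "\<forall>y\<in>\<Phi> ` closure \<Omega>. \<bar>y\<bar> \<le> P"
    by (meson compact_imp_bounded bounded_real)
  then have P: "\<And>x. x \<in> \<Omega> \<Longrightarrow> \<Phi> x \<le> P"
    by (meson abs_le_D1 closure_subset image_eqI subsetD)
  define Q where "Q = max (real_of_ereal (Phi_norm \<Omega> \<Phi> u0)) E"
  have "E \<le> Q" by (simp add: Q_def)
  have "Phi_norm \<Omega> \<Phi> u0 \<le> ereal Q"
    using u0 by (cases "Phi_norm \<Omega> \<Phi> u0") (auto simp: Q_def)
  moreover have "ess_sup lebesgue {0<..<t} (\<lambda>\<tau>. ereal (e \<tau>)) \<le> ereal Q" if "t \<in> tint T" for t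
    unfolding ess_sup_le_iff using e_bound
    by (rule eventually_mono)
       (use that \<open>E \<le> Q\<close> in \<open>auto simp: tint_def intro: less_trans[of _ "ereal t"]\<close>)
  ultimately have "AE t in lebesgue. t \<in> tint T \<longrightarrow> Phi_norm \<Omega> \<Phi> (\<lambda>x. u x t) \<le> ereal Q"
    using Phi_bound by (auto elim!: eventually_mono intro: order_trans)
  then show thesis
    using torsion_function_pos[OF \<Omega> \<Phi>] P
    by (intro that[of "P * Q"]) (auto elim!: eventually_mono intro: Linf_norm_le_of_Phi_norm_le)
qed

lemma abs_ln_le:
  fixes y :: real
  assumes "0 < y" "y \<le> M" "1 / y \<le> K"
  shows "\<bar>ln y\<bar> \<le> max M (ln K)"
proof -
  have "ln y \<le> M" using ln_le_minus_one[OF assms(1)] assms(2) by linarith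
  moreover have "ln (1 / y) \<le> ln K"
    using assms(1,3) by (subst ln_le_cancel_iff) (auto intro: less_le_trans[of 0 "1 / y"])
  then have "- ln y \<le> ln K"
    using assms(1) by (simp add: ln_div)
  ultimately show ?thesis by linarith
qed

lemma exp_estimate_le:
  fixes e :: real
  assumes "e \<le> E0 * exp (k * A * X)" "\<bar>A\<bar> \<le> A0" "\<bar>X\<bar> \<le> X0" "0 \<le> k"
  shows "e \<le> \<bar>E0\<bar> * exp (k * A0 * X0)"
proof -
  have "A * X \<le> A0 * X0"
    using mult_mono[OF assms(2,3) order_trans[OF abs_ge_zero assms(2)]] abs_mult[of A X]
      abs_ge_self[of "A * X"] by fastforce
  then have "k * A * X \<le> k * A0 * X0"
    using mult_left_mono[OF _ assms(4)] by (simp add: mult.assoc)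
  then have "exp (k * A * X) \<le> exp (k * A0 * X0)" by simp
  then have "E0 * exp (k * A * X) \<le> \<bar>E0\<bar> * exp (k * A0 * X0)"
    by (smt (verit) abs_ge_self exp_gt_zero mult_mono mult_right_mono)
  with assms(1) show ?thesis by linarith
qed

lemma exp_estimate_bounded:
  fixes e :: real and g h :: "real \<Rightarrow> real"
  assumes t: "0 < t" "t < T'" and C: "0 < C"
    and estimate: "e \<le> E0 * exp (1 / (2 * C)
        * real_of_ereal (ess_sup lebesgue {0<..<t} (\<lambda>\<tau>. ereal (g \<tau>)))
        * (X - Y + (LINT \<tau>:{0<..<t}|lebesgue. h \<tau>)))"
    and g: "AE \<tau> in lebesgue. \<tau> \<in> {0<..<T'} \<longrightarrow> \<bar>g \<tau>\<bar> \<le> G"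
    and h: "AE \<tau> in lebesgue. \<tau> \<in> {0<..<T'} \<longrightarrow> \<bar>h \<tau>\<bar> \<le> H"
    and X: "\<bar>X\<bar> \<le> X0"
  shows "e \<le> \<bar>E0\<bar> * exp (1 / (2 * C) * G * (X0 + \<bar>Y\<bar> + max H 0 * T'))"
proof -
  have Ioo: "{0<..<t} \<in> sets lebesgue" "emeasure lebesgue {0<..<t} = ennreal t"
    "measure lebesgue {0<..<t} = t"
    using t by (simp_all add: emeasure_completion measure_def)
  have "AE \<tau> in lebesgue. \<tau> \<in> {0<..<t} \<longrightarrow> \<bar>g \<tau>\<bar> \<le> G"
    using g by (rule eventually_mono) (use t in auto)
  with Ioo t have G: "\<bar>real_of_ereal (ess_sup lebesgue {0<..<t} (\<lambda>\<tau>. ereal (g \<tau>)))\<bar> \<le> G"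
    by (intro abs_real_of_ess_sup_le) auto
  have "AE \<tau> in lebesgue. \<tau> \<in> {0<..<t} \<longrightarrow> \<bar>h \<tau>\<bar> \<le> H"
    using h by (rule eventually_mono) (use t in auto)
  from abs_set_integral_le[OF Ioo(1) _ this] Ioo t
  have "\<bar>LINT \<tau>:{0<..<t}|lebesgue. h \<tau>\<bar> \<le> max H 0 * T'"
    by (auto intro!: order_trans[OF _ mult_left_mono[of t T']])
  with X have "\<bar>X - Y + (LINT \<tau>:{0<..<t}|lebesgue. h \<tau>)\<bar> \<le> X0 + \<bar>Y\<bar> + max H 0 * T'"
    by arith
  from exp_estimate_le[OF estimate G this] C show ?thesis by simp
qed

lemma AE_abs_weighted_ln_le:
  fixes u :: "'a \<Rightarrow> 'b \<Rightarrow> real" and \<phi> :: "'a \<Rightarrow> real"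
  assumes bounded: "AE p in M. p \<in> S \<times> I \<longrightarrow> \<bar>u (fst p) (snd p)\<bar> \<le> B"
    and positive: "AE p in M. p \<in> S \<times> I \<longrightarrow> 0 < u (fst p) (snd p) \<and> 1 / u (fst p) (snd p) \<le> K"
    and \<phi>: "\<forall>x\<in>S. \<bar>\<phi> x\<bar> \<le> P"
  shows "AE p in M. p \<in> S \<times> I \<longrightarrow> \<bar>\<phi> (fst p) * ln (u (fst p) (snd p))\<bar> \<le> P * max B (ln K)"
  using bounded positive
proof (eventually_elim, intro impI)
  case (elim p)
  assume p: "p \<in> S \<times> I"
  with elim have "0 < u (fst p) (snd p)" "u (fst p) (snd p) \<le> B" "1 / u (fst p) (snd p) \<le> K"
    by (auto simp: abs_le_iff)
  then have "\<bar>ln (u (fst p) (snd p))\<bar> \<le> max B (ln K)"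
    by (rule abs_ln_le)
  moreover have "\<bar>\<phi> (fst p)\<bar> \<le> P" using p \<phi> by auto
  ultimately show "\<bar>\<phi> (fst p) * ln (u (fst p) (snd p))\<bar> \<le> P * max B (ln K)"
    unfolding abs_mult by (intro mult_mono) auto
qed

lemma energy_bounded_initially:
  fixes \<Omega> :: "'a::euclidean_space set" and u :: "'a \<Rightarrow> real \<Rightarrow> real"
    and Du :: "'a \<Rightarrow> real \<Rightarrow> 'a" and Du0 :: "'a \<Rightarrow> 'a"
  assumes \<Omega>: "open \<Omega>" "bounded \<Omega>" "\<Omega> \<noteq> {}"
    and T': "0 < T'" "ereal T' < Tmax"
    and u_bounded: "AE p in lebesgue. p \<in> \<Omega> \<times> {0<..<T'} \<longrightarrow> \<bar>u (fst p) (snd p)\<bar> \<le> M"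
    and locpos: "locally_positive \<Omega> Tmax u"
    and energy_bound:
      "\<forall>\<Omega>' \<phi>. smooth_domain \<Omega>' \<and> closure \<Omega>' \<subseteq> \<Omega> \<and> torsion_function \<Omega>' \<phi> \<longrightarrow>
         (\<exists>C>0. AE t in lebesgue. t \<in> tint Tmax \<longrightarrow>
            energy \<Omega> Du t \<le> energy \<Omega> (\<lambda>x _. Du0 x) 0 *
              exp (1 / (2 * C)
                * real_of_ereal (ess_sup lebesgue {0<..<t} (\<lambda>\<tau>. ereal (LINT x:\<Omega>|lebesgue. u x \<tau>)))
                * ((LINT x:\<Omega>'|lebesgue. \<phi> x * ln (u x t))
                   - (LINT x:\<Omega>'|lebesgue. \<phi> x * ln (u0 x))
                   + (LINT \<tau>:{0<..<t}|lebesgue. LINT x:\<Omega>'|lebesgue. u x \<tau>))))"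
  obtains E where "AE t in lebesgue. t \<in> {0<..<T'} \<longrightarrow> energy \<Omega> Du t \<le> E"
proof -
  obtain \<Omega>' \<phi> P where \<Omega>': "smooth_domain \<Omega>'" "closure \<Omega>' \<subseteq> \<Omega>" "torsion_function \<Omega>' \<phi>"
    and \<phi>: "\<forall>x\<in>\<Omega>'. \<bar>\<phi> x\<bar> \<le> P"
    using smooth_subdomain_with_torsion[OF \<Omega>(1)] \<Omega>(3) by blast
  obtain C where C: "0 < C" and estimate: "AE t in lebesgue. t \<in> tint Tmax \<longrightarrow>
      energy \<Omega> Du t \<le> energy \<Omega> (\<lambda>x _. Du0 x) 0 *
        exp (1 / (2 * C)
          * real_of_ereal (ess_sup lebesgue {0<..<t} (\<lambda>\<tau>. ereal (LINT x:\<Omega>|lebesgue. u x \<tau>)))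
          * ((LINT x:\<Omega>'|lebesgue. \<phi> x * ln (u x t))
             - (LINT x:\<Omega>'|lebesgue. \<phi> x * ln (u0 x))
             + (LINT \<tau>:{0<..<t}|lebesgue. LINT x:\<Omega>'|lebesgue. u x \<tau>)))"
    using energy_bound \<Omega>' by blast
  have \<Omega>'_open: "open \<Omega>'" and \<Omega>'_bounded: "bounded \<Omega>'"
    using \<Omega>'(1) unfolding smooth_domain_def by auto
  have \<Omega>_meas: "\<Omega> \<in> sets lebesgue" "emeasure lebesgue \<Omega> < \<infinity>"
    and \<Omega>'_meas: "\<Omega>' \<in> sets lebesgue" "emeasure lebesgue \<Omega>' < \<infinity>"
    using lmeasurable_open[OF \<Omega>(2,1)] lmeasurable_open[OF \<Omega>'_bounded \<Omega>'_open]
    by (auto simp: fmeasurable_def)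
  have u_bounded': "AE p in lebesgue. p \<in> \<Omega>' \<times> {0<..<T'} \<longrightarrow> \<bar>u (fst p) (snd p)\<bar> \<le> M"
    using u_bounded by (rule eventually_mono) (use \<Omega>'(2) closure_subset in auto)
  obtain K where K: "AE p in lebesgue. p \<in> closure \<Omega>' \<times> {0<..<T'} \<longrightarrow>
      0 < u (fst p) (snd p) \<and> 1 / u (fst p) (snd p) \<le> K"
    using locpos \<Omega>'(2) \<Omega>'_bounded T' unfolding locally_positive_def
    by (meson compact_closure less_imp_le)
  then have positive: "AE p in lebesgue. p \<in> \<Omega>' \<times> {0<..<T'} \<longrightarrow>
      0 < u (fst p) (snd p) \<and> 1 / u (fst p) (snd p) \<le> K"
    by (rule eventually_mono) (use closure_subset in auto)
  have int_\<Omega>: "AE \<tau> in lebesgue. \<tau> \<in> {0<..<T'} \<longrightarrow>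
      \<bar>LINT x:\<Omega>|lebesgue. u x \<tau>\<bar> \<le> max M 0 * measure lebesgue \<Omega>"
    and int_\<Omega>': "AE \<tau> in lebesgue. \<tau> \<in> {0<..<T'} \<longrightarrow>
      \<bar>LINT x:\<Omega>'|lebesgue. u x \<tau>\<bar> \<le> max M 0 * measure lebesgue \<Omega>'"
    using AE_abs_set_integral_slice_le[OF \<Omega>_meas u_bounded]
      AE_abs_set_integral_slice_le[OF \<Omega>'_meas u_bounded'] by auto
  from AE_abs_set_integral_slice_le[OF \<Omega>'_meas AE_abs_weighted_ln_le[OF u_bounded' positive \<phi>]]
  have "AE t in lebesgue. t \<in> {0<..<T'} \<longrightarrow> \<bar>LINT x:\<Omega>'|lebesgue. \<phi> x * ln (u x t)\<bar>
      \<le> max (P * max M (ln K)) 0 * measure lebesgue \<Omega>'" .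
  \<comment> \<open>the integral of \<open>\<phi> ln u0\<close> is just a fixed real number, so nothing is needed about \<open>u0\<close>\<close>
  then have "AE t in lebesgue. t \<in> {0<..<T'} \<longrightarrow> energy \<Omega> Du t \<le>
      \<bar>energy \<Omega> (\<lambda>x _. Du0 x) 0\<bar> * exp (1 / (2 * C) * (max M 0 * measure lebesgue \<Omega>)
        * (max (P * max M (ln K)) 0 * measure lebesgue \<Omega>' + \<bar>LINT x:\<Omega>'|lebesgue. \<phi> x * ln (u0 x)\<bar>
           + max (max M 0 * measure lebesgue \<Omega>') 0 * T'))"
    using estimate
  proof eventually_elim
    case (elim t)
    have "t \<in> {0<..<T'} \<Longrightarrow> t \<in> tint Tmax"
      using T'(2) by (auto simp: tint_def intro: less_trans[of _ "ereal T'"])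
    then show ?case
      using exp_estimate_bounded[OF _ _ C elim(2)[rule_format] int_\<Omega> int_\<Omega>' elim(1)[rule_format]]
      by auto
  qed
  then show thesis ..
qed

theorem corollary2p9:
  fixes \<Omega> :: "'a::euclidean_space set" and \<Phi> u0 :: "'a \<Rightarrow> real" and Du0 :: "'a \<Rightarrow> 'a"
    and Tmax :: ereal and u :: "'a \<Rightarrow> real \<Rightarrow> real" and Du :: "'a \<Rightarrow> real \<Rightarrow> 'a"
  assumes dom: "smooth_domain \<Omega>"
    and Phi: "torsion_function \<Omega> \<Phi>"
    and u0_Linf: "Linf_norm \<Omega> u0 < \<infinity>"
    and u0_W: "W12_0 \<Omega> u0 Du0"
    and u0_nonneg: "AE x in lebesgue. x \<in> \<Omega> \<longrightarrow> u0 x \<ge> 0"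
    and u0_pos: "\<forall>K. compact K \<and> K \<subseteq> \<Omega> \<longrightarrow>
                   (\<exists>M. AE x in lebesgue. x \<in> K \<longrightarrow> u0 x > 0 \<and> 1 / u0 x \<le> M)"
    and u0_Phi: "Phi_norm \<Omega> \<Phi> u0 < \<infinity>"
    and Tmax_pos: "0 < Tmax"
    and sol: "weak_solution \<Omega> Tmax u0 u Du"
    and locpos: "locally_positive \<Omega> Tmax u"
    and extensibility: "Tmax = \<infinity> \<or> ess_limsup_left Tmax (\<lambda>t. Linf_norm \<Omega> (\<lambda>x. u x t)) = \<infinity>"
    and energy_bound:
      "\<forall>\<Omega>' \<phi>. smooth_domain \<Omega>' \<and> closure \<Omega>' \<subseteq> \<Omega> \<and> torsion_function \<Omega>' \<phi> \<longrightarrow>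
         (\<exists>C>0. AE t in lebesgue. t \<in> tint Tmax \<longrightarrow>
            energy \<Omega> Du t \<le> energy \<Omega> (\<lambda>x _. Du0 x) 0 *
              exp (1 / (2 * C)
                * real_of_ereal (ess_sup lebesgue {0<..<t} (\<lambda>\<tau>. ereal (LINT x:\<Omega>|lebesgue. u x \<tau>)))
                * ((LINT x:\<Omega>'|lebesgue. \<phi> x * ln (u x t))
                   - (LINT x:\<Omega>'|lebesgue. \<phi> x * ln (u0 x))
                   + (LINT \<tau>:{0<..<t}|lebesgue. LINT x:\<Omega>'|lebesgue. u x \<tau>))))"
    and Phi_bound:
      "AE t in lebesgue. t \<in> tint Tmax \<longrightarrow>
         Phi_norm \<Omega> \<Phi> (\<lambda>x. u x t) \<le>
           max (Phi_norm \<Omega> \<Phi> u0) (ess_sup lebesgue {0<..<t} (\<lambda>\<tau>. ereal (energy \<Omega> Du \<tau>)))"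
    and blowup: "ess_limsup_left Tmax (\<lambda>t. Linf_norm \<Omega> (\<lambda>x. u x t)) = \<infinity>"
  shows "ess_limsup_left Tmax (\<lambda>t. ereal (energy \<Omega> Du t)) = \<infinity>"
proof (rule ccontr)
  assume "ess_limsup_left Tmax (\<lambda>t. ereal (energy \<Omega> Du t)) \<noteq> \<infinity>"
  then obtain a E1 where a: "0 < a" "ereal a < Tmax"
    and late: "AE t in lebesgue. a < t \<and> ereal t < Tmax \<longrightarrow> energy \<Omega> Du t \<le> E1"
    by (rule ess_limsup_left_finite_imp_bounded)
  obtain T' where T': "a < T'" "ereal T' < Tmax"
    using ereal_dense2[OF a(2)] by auto
  with a have "0 < T'" by simp
  have \<Omega>: "open \<Omega>" "bounded \<Omega>" "\<Omega> \<noteq> {}"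
    using dom unfolding smooth_domain_def by auto
  obtain M where "AE p in lebesgue. p \<in> \<Omega> \<times> {0<..<T'} \<longrightarrow> \<bar>u (fst p) (snd p)\<bar> \<le> M"
    using sol \<open>0 < T'\<close> T'(2) unfolding weak_solution_def by blast
  then obtain E2 where early: "AE t in lebesgue. t \<in> {0<..<T'} \<longrightarrow> energy \<Omega> Du t \<le> E2"
    by (rule energy_bounded_initially[OF \<Omega> \<open>0 < T'\<close> T'(2) _ locpos energy_bound])
  have "AE t in lebesgue. t \<in> tint Tmax \<longrightarrow> energy \<Omega> Du t \<le> max E1 E2"
    using late early
  proof (eventually_elim, intro impI)
    case (elim t)
    assume "t \<in> tint Tmax"
    with elim T' show "energy \<Omega> Du t \<le> max E1 E2"
      by (cases "t < T'") (auto simp: tint_def)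
  qed
  then obtain W where "AE t in lebesgue. t \<in> tint Tmax \<longrightarrow> Linf_norm \<Omega> (\<lambda>x. u x t) \<le> ereal W"
    by (rule Linf_norm_bounded_if_energy_bounded[OF \<Omega>(1,2) Phi u0_Phi Phi_bound])
  then have "ess_limsup_left Tmax (\<lambda>t. Linf_norm \<Omega> (\<lambda>x. u x t)) \<le> ereal W"
    using a by (intro ess_limsup_left_le[OF a]) (auto simp: tint_def elim!: eventually_mono)
  with blowup show False by simp
qed

end
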